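(* Let $1<p<\infty$ and $\alpha>0$. Then $$L^{p),\alpha}(\Omega)=\bigl(L^1(\Omega),L^p(\Omega)\bigr)_{1,\infty;-\frac{\alpha}{p}}$$ with equivalent norms, i.e. $\|f\|_{p),\alpha}\approx\sup_{0<t<1}t^{-1}(1-\log t)^{-\alpha/p}K(f,t;L^1,L^p)$ for all measurable $f$, with constants independent of $f$.
   Context: $\Omega\subset\mathbb R^n$ is a bounded open set with $|\Omega|=1$; $f_*$ is the decreasing rearrangement of $|f|$ on $(0,1)$; $\log$ is the natural logarithm. Grand Lebesgue space: $L^{p),\alpha}(\Omega)$ is the set of measurable $f$ with $\|f\|_{p),\alpha}=\sup_{0<t<1}(1-\log t)^{-\alpha/p}(\int_t^1 f_*^p)^{1/p}<\infty$. K-functional: $K(g,t;X_0,X_1)=\inf_{g=g_0+g_1}(\|g_0\|_{X_0}+t\|g_1\|_{X_1})$. For $\gamma\in\mathbb R$, $(X_0,X_1)_{1,\infty;\gamma}$ is the set of $g\in X_0+X_1$ with $\sup_{0<t<1}t^{-1}(1-\log t)^{\gamma}K(g,t;X_0,X_1)<\infty$, this supremum being the norm. *)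

theory Defs
  imports "HOL-Analysis.Analysis"
begin

definition enn_powr :: "ennreal \<Rightarrow> real \<Rightarrow> ennreal" where
  "enn_powr x q = (if x = \<infinity> then \<infinity> else ennreal (enn2real x powr q))"

definition distfun :: "'a::euclidean_space set \<Rightarrow> ('a \<Rightarrow> real) \<Rightarrow> real \<Rightarrow> ennreal" where
  "distfun \<Omega> f lam = emeasure lebesgue {x\<in>\<Omega>. \<bar>f x\<bar> > lam}"

definition decr_rearr :: "'a::euclidean_space set \<Rightarrow> ('a \<Rightarrow> real) \<Rightarrow> real \<Rightarrow> real" where
  "decr_rearr \<Omega> f s = Inf {lam::real. 0 \<le> lam \<and> distfun \<Omega> f lam \<le> ennreal s}"

definition grand_norm :: "'a::euclidean_space set \<Rightarrow> real \<Rightarrow> real \<Rightarrow> ('a \<Rightarrow> real) \<Rightarrow> ennreal" where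
  "grand_norm \<Omega> p \<alpha> f =
     (SUP t\<in>{0<..<1::real}. ennreal ((1 - ln t) powr (-\<alpha>/p)) *
        enn_powr (\<integral>\<^sup>+ s\<in>{t..1}. ennreal (decr_rearr \<Omega> f s powr p) \<partial>lborel) (1/p))"

definition Lq_norm :: "'a::euclidean_space set \<Rightarrow> real \<Rightarrow> ('a \<Rightarrow> real) \<Rightarrow> ennreal" where
  "Lq_norm \<Omega> q g = enn_powr (\<integral>\<^sup>+ x. ennreal (\<bar>g x\<bar> powr q) \<partial>(lebesgue_on \<Omega>)) (1/q)"

definition K_fun :: "'a::euclidean_space set \<Rightarrow> real \<Rightarrow> ('a \<Rightarrow> real) \<Rightarrow> real \<Rightarrow> ennreal" where
  "K_fun \<Omega> p g t =
     (INF (g0, g1)\<in>{(g0, g1). g0 \<in> borel_measurable (lebesgue_on \<Omega>) \<and>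
                              g1 \<in> borel_measurable (lebesgue_on \<Omega>) \<and>
                              (\<forall>x\<in>\<Omega>. g x = g0 x + g1 x)}.
        Lq_norm \<Omega> 1 g0 + ennreal t * Lq_norm \<Omega> p g1)"

definition interp_norm :: "'a::euclidean_space set \<Rightarrow> real \<Rightarrow> real \<Rightarrow> ('a \<Rightarrow> real) \<Rightarrow> ennreal" where
  "interp_norm \<Omega> p \<gamma> g =
     (SUP t\<in>{0<..<1::real}. ennreal (t powr (-1) * (1 - ln t) powr \<gamma>) * K_fun \<Omega> p g t)"

end

theory Submission
  imports Defs "HOL-Probability.Probability" "HOL-Real_Asymp.Real_Asymp"
begin

text \<open>Both norms are governed by the decreasing rearrangement \<open>f\<^sub>*\<close>, through
  Holmstedt-type estimates for \<open>t = u\<^bsup>1-1/p\<^esup>\<close>: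
  \<open>t (\<integral>\<^sub>u\<^sup>1 f\<^sub>*\<^sup>p)\<^bsup>1/p\<^esup> \<le> 4 K(f,t)\<close> and
  \<open>K(f,t) \<le> 3 \<integral>\<^sub>0\<^sup>u f\<^sub>* + 2 t (\<integral>\<^sub>u\<^sup>1 f\<^sub>*\<^sup>p)\<^bsup>1/p\<^esup>\<close>.
  The first comes from splitting an arbitrary decomposition \<open>f = g\<^sub>0 + g\<^sub>1\<close> at the level
  \<open>\<parallel>g\<^sub>0\<parallel>\<^sub>1/u\<close>, the second from truncating \<open>f\<close> at height \<open>f\<^sub>*(u)\<close>.
  Since \<open>1 - log t\<close> and \<open>1 - log u\<close> are comparable, the first estimate bounds the grand norm
  by the interpolation norm. Conversely, the grand norm controls the tail integral and, applied on
  \<open>[t/2, t]\<close>, also \<open>t f\<^sub>*(t) \<lesssim> t\<^bsup>1-1/p\<^esup>(1 - log t)\<^bsup>\<alpha>/p\<^esup>\<close>;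
  summing this over dyadic intervals bounds \<open>\<integral>\<^sub>0\<^sup>u f\<^sub>*\<close> by the same profile at \<open>u\<close>.\<close>

lemma powr_add_le_two_powr:
  fixes x y p :: real
  assumes "0 \<le> x" "0 \<le> y" "0 < p"
  shows "(x + y) powr p \<le> 2 powr p * (x powr p + y powr p)"
proof -
  have "(x + y) powr p \<le> (2 * max x y) powr p"
    by (rule powr_mono2) (use assms in auto)
  also have "\<dots> = 2 powr p * max x y powr p" by (rule powr_mult)
  also have "max x y powr p \<le> x powr p + y powr p"
    by (cases "x \<le> y") (auto simp: max_def)
  then have "2 powr p * max x y powr p \<le> 2 powr p * (x powr p + y powr p)"
    by (intro mult_left_mono) auto
  finally show ?thesis .
qed

lemma powr_le_powr_minus_one_mult:
  fixes x b p :: real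
  assumes "0 \<le> x" "x \<le> b" "1 \<le> p"
  shows "x powr p \<le> b powr (p - 1) * x"
proof -
  have "x powr p = x powr (p - 1) * x powr 1" by (subst powr_add[symmetric]) simp
  also have "\<dots> = x powr (p - 1) * x" using powr_one[OF assms(1)] by simp
  also have "\<dots> \<le> b powr (p - 1) * x"
    by (intro mult_right_mono powr_mono2) (use assms in auto)
  finally show ?thesis .
qed

lemma min_powr_le_split:
  fixes y0 y1 a b p :: real
  assumes a: "0 \<le> a" and b: "0 \<le> b" and p: "1 \<le> p"
  shows "min \<bar>y0 + y1\<bar> a powr p
    \<le> (if b < \<bar>y0\<bar> then a powr p else 0) + 2 powr p * (b powr (p - 1) * \<bar>y0\<bar> + \<bar>y1\<bar> powr p)"
proof (cases "b < \<bar>y0\<bar>")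
  case True
  have "min \<bar>y0 + y1\<bar> a powr p \<le> a powr p" by (rule powr_mono2) (use a p in auto)
  moreover have "0 \<le> 2 powr p * (b powr (p - 1) * \<bar>y0\<bar> + \<bar>y1\<bar> powr p)" by simp
  ultimately show ?thesis unfolding if_P[OF True] by linarith
next
  case False
  have "min \<bar>y0 + y1\<bar> a powr p \<le> (\<bar>y0\<bar> + \<bar>y1\<bar>) powr p"
    by (rule powr_mono2) (use a p in auto)
  also have "\<dots> \<le> 2 powr p * (\<bar>y0\<bar> powr p + \<bar>y1\<bar> powr p)"
    by (rule powr_add_le_two_powr) (use p in auto)
  also have "\<bar>y0\<bar> powr p \<le> b powr (p - 1) * \<bar>y0\<bar>"
    by (rule powr_le_powr_minus_one_mult) (use False p in auto)
  then have "2 powr p * (\<bar>y0\<bar> powr p + \<bar>y1\<bar> powr p) \<le> 2 powr p * (b powr (p - 1) * \<bar>y0\<bar> + \<bar>y1\<bar> powr p)"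
    by (intro mult_left_mono) auto
  finally show ?thesis using False by simp
qed

lemma mult_root_le_four_sum:
  fixes u F A B p :: real
  assumes u: "0 < u" and F: "0 \<le> F" and A: "0 \<le> A" and B: "0 \<le> B" and p: "1 < p"
    and H: "F \<le> 2 powr p * ((A / u) powr (p - 1) * A + B powr p)"
  shows "u powr (1 - 1/p) * F powr (1/p) \<le> 4 * (A + u powr (1 - 1/p) * B)"
proof -
  define \<tau> where "\<tau> = u powr (1 - 1/p)"
  define X where "X = A + \<tau> * B"
  have \<tau>: "0 < \<tau>" "\<tau> powr p = u powr (p - 1)"
    unfolding \<tau>_def using u p by (simp_all add: powr_powr algebra_simps)
  have X: "0 \<le> X" "A \<le> X" "\<tau> * B \<le> X" unfolding X_def using \<tau> A B by simp_all
  have "u powr (p - 1) * (A / u) powr (p - 1) * A = A powr (p - 1) * A powr 1"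
    using A u by (simp add: powr_mult[symmetric])
  also have "\<dots> = A powr p" by (subst powr_add[symmetric]) simp
  finally have A_powr: "u powr (p - 1) * (A / u) powr (p - 1) * A = A powr p" .
  have "\<tau> powr p * F \<le> \<tau> powr p * (2 powr p * ((A / u) powr (p - 1) * A + B powr p))"
    using H by (rule mult_left_mono) simp
  also have "\<dots> = 2 powr p * (A powr p + (\<tau> * B) powr p)"
    unfolding A_powr[symmetric] using \<tau>(2) by (simp add: powr_mult algebra_simps)
  also have "A powr p + (\<tau> * B) powr p \<le> X powr p + X powr p"
    using X A B \<tau> p by (intro add_mono powr_mono2) auto
  then have "2 powr p * (A powr p + (\<tau> * B) powr p) \<le> 2 powr p * (X powr p + X powr p)"
    by (rule mult_left_mono) simp
  also have "\<dots> = 2 powr (p + 1) * X powr p" by (simp add: powr_add)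
  finally have "(\<tau> powr p * F) powr (1/p) \<le> (2 powr (p + 1) * X powr p) powr (1/p)"
    using \<tau> F p by (intro powr_mono2) auto
  also have "(\<tau> powr p * F) powr (1/p) = \<tau> * F powr (1/p)"
    using \<tau>(1) p by (simp add: powr_mult powr_powr)
  also have "(2 powr (p + 1) * X powr p) powr (1/p) = 2 powr ((p + 1) / p) * X"
    using X p by (simp add: powr_mult powr_powr)
  also have "2 powr ((p + 1) / p) \<le> 2 powr (2::real)"
    by (rule powr_mono) (use p in \<open>auto simp: field_simps\<close>)
  then have "2 powr ((p + 1) / p) * X \<le> 4 * X"
    using X by (intro mult_right_mono) auto
  finally show ?thesis unfolding X_def \<tau>_def .
qed

lemma one_minus_ln_half_powr_le:
  fixes t c :: real
  assumes t: "0 < t" "t < 1" and c: "0 \<le> c"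
  shows "(1 - ln (t / 2)) powr c \<le> 2 powr c * (1 - ln t) powr c"
proof -
  have ln: "ln t < 0" "ln (t / 2) = ln t - ln 2" using t by (simp_all add: ln_div)
  moreover have "0 < ln (2::real)" by simp
  ultimately have "0 \<le> 1 - ln (t / 2)" by linarith
  moreover have "1 - ln (t / 2) \<le> 2 * (1 - ln t)"
    using ln ln_2_less_1 by (simp add: algebra_simps)
  ultimately have "(1 - ln (t / 2)) powr c \<le> (2 * (1 - ln t)) powr c"
    using c by (intro powr_mono2) auto
  then show ?thesis unfolding powr_mult .
qed

lemma one_minus_ln_dyadic_le:
  fixes u :: real and k :: nat
  assumes "0 < u" "u < 1"
  shows "1 - ln (u / 2 ^ Suc k) \<le> (1 - ln u) * (real k + 2)"
proof -
  have "ln ((2::real) ^ Suc k) = (real k + 1) * ln 2" by (subst ln_realpow) auto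
  then have "1 - ln (u / 2 ^ Suc k) = 1 - ln u + (real k + 1) * ln 2"
    using assms by (simp add: ln_div)
  also have "\<dots> \<le> (1 - ln u) + (real k + 1) * (1 - ln u)"
  proof -
    have "ln u < 0" using assms by simp
    then show ?thesis using ln_2_less_1 by (intro add_left_mono mult_left_mono) auto
  qed
  finally show ?thesis by (simp add: algebra_simps)
qed

lemma log_weight_ratio_le:
  fixes \<tau> q c :: real
  assumes \<tau>: "0 < \<tau>" "\<tau> < 1" and q: "1 \<le> q" and c: "0 \<le> c"
  shows "(1 - ln \<tau>) powr (- c) * (1 - ln (\<tau> powr q)) powr c \<le> q powr c"
proof -
  have ln: "ln \<tau> < 0" "ln (\<tau> powr q) = q * ln \<tau>" using \<tau> by (simp_all add: ln_powr)
  moreover have "q * ln \<tau> \<le> 0" using ln q by (simp add: mult_nonneg_nonpos)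
  ultimately have pos: "0 < 1 - ln \<tau>" "0 \<le> 1 - ln (\<tau> powr q)" by linarith+
  have "1 - ln (\<tau> powr q) \<le> q * (1 - ln \<tau>)"
    using ln q by (simp add: algebra_simps)
  then have ratio: "(1 - ln (\<tau> powr q)) / (1 - ln \<tau>) \<le> q"
    using pos by (simp add: pos_divide_le_eq)
  have "(1 - ln \<tau>) powr (- c) * (1 - ln (\<tau> powr q)) powr c = ((1 - ln (\<tau> powr q)) / (1 - ln \<tau>)) powr c"
    by (subst powr_divide) (simp add: powr_minus divide_inverse mult.commute)
  also have "\<dots> \<le> q powr c"
    using ratio pos c by (intro powr_mono2) auto
  finally show ?thesis .
qed

lemma enn_powr_ennreal: "0 \<le> x \<Longrightarrow> enn_powr (ennreal x) q = ennreal (x powr q)"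
  unfolding enn_powr_def by simp

lemma enn_powr_one [simp]: "enn_powr x 1 = x"
  unfolding enn_powr_def by (cases x) auto

lemma enn_powr_mono:
  assumes "x \<le> y" "0 \<le> q"
  shows "enn_powr x q \<le> enn_powr y q"
proof (cases "y = \<infinity>")
  case False
  then have "x \<noteq> \<infinity>" using assms by (auto simp: top_unique)
  with False show ?thesis using assms unfolding enn_powr_def
    by (auto intro!: ennreal_leI powr_mono2 enn2real_mono simp: less_top)
qed (simp add: enn_powr_def)

lemma enn_powr_add_le:
  assumes q: "0 < q" "q \<le> 1"
  shows "enn_powr (x + y) q \<le> 2 * (enn_powr x q + enn_powr y q)"
proof (cases "x = \<infinity> \<or> y = \<infinity>")
  case True
  then show ?thesis by (auto simp: enn_powr_def)
next
  case False
  then obtain a b where ab: "x = ennreal a" "y = ennreal b" "0 \<le> a" "0 \<le> b"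
    by (cases x; cases y) auto
  have "(a + b) powr q \<le> (2 * max a b) powr q"
    by (rule powr_mono2) (use ab q in auto)
  also have "\<dots> = 2 powr q * max a b powr q" by (rule powr_mult)
  also have "\<dots> \<le> 2 * (a powr q + b powr q)"
  proof (rule mult_mono)
    show "2 powr q \<le> 2" using powr_mono[of q 1 2] q by simp
    show "max a b powr q \<le> a powr q + b powr q" by (cases "a \<le> b") (auto simp: max_def)
  qed simp_all
  then have "ennreal ((a + b) powr q) \<le> ennreal (2 * (a powr q + b powr q))"
    by (intro ennreal_leI) (rule order.trans[OF calculation])
  then show ?thesis
    using ab enn_powr_ennreal[of "a + b" q] by (simp add: enn_powr_ennreal ennreal_mult)
qed

lemma ennreal_quarter_le_iff: "ennreal (1/4) * x \<le> y \<longleftrightarrow> x \<le> 4 * y"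
proof -
  have "ennreal (1/4) * 4 = ennreal (1/4 * 4)" by (subst ennreal_mult) simp_all
  then have four: "ennreal (1/4) * 4 = 1" by simp
  show ?thesis
  proof
    assume "ennreal (1/4) * x \<le> y"
    then have "4 * (ennreal (1/4) * x) \<le> 4 * y" by (rule mult_left_mono) simp
    then show "x \<le> 4 * y" using four by (simp add: mult.assoc[symmetric] mult.commute[of 4])
  next
    assume "x \<le> 4 * y"
    then have "ennreal (1/4) * x \<le> ennreal (1/4) * (4 * y)" by (rule mult_left_mono) simp
    then show "ennreal (1/4) * x \<le> y" using four by (simp add: mult.assoc[symmetric])
  qed
qed

section \<open>A dyadic Hardy inequality\<close>

lemma dyadic_cover:
  fixes u s :: real
  assumes "0 < s" "s < u"
  obtains k where "u / 2 ^ Suc k < s" "s \<le> u / 2 ^ k"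
proof -
  define k where "k = nat \<lfloor>log 2 (u / s)\<rfloor>"
  have lg: "0 < log 2 (u / s)" using assms by simp
  have "2 powr real k \<le> 2 powr log 2 (u / s)" "2 powr log 2 (u / s) < 2 powr (real k + 1)"
    unfolding k_def using lg by simp_all
  then have "2 ^ k \<le> u / s" "u / s < 2 ^ Suc k"
    using assms by (simp_all add: powr_realpow[symmetric] powr_add)
  then show ?thesis using assms that by (simp add: field_simps)
qed

lemma summable_powr_mult_geometric:
  fixes \<beta> r :: real
  assumes "0 < r" "r < 1"
  shows "summable (\<lambda>k. (real k + 2) powr \<beta> * r ^ k)"
proof (rule ratio_test_convergence)
  show "\<forall>\<^sub>F k in sequentially. 0 < (real k + 2) powr \<beta> * r ^ k" using assms by simp
  have "(\<lambda>k. ((real k + 2) / (real k + 3)) powr \<beta> / r) \<longlonglongrightarrow> inverse r"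
    using assms by real_asymp
  moreover have "((real k + 2) / (real k + 3)) powr \<beta> / r
      = (real k + 2) powr \<beta> * r ^ k / ((real (Suc k) + 2) powr \<beta> * r ^ Suc k)" for k
    using assms by (auto simp: powr_divide field_simps)
  ultimately have "(\<lambda>k. ereal ((real k + 2) powr \<beta> * r ^ k / ((real (Suc k) + 2) powr \<beta> * r ^ Suc k)))
      \<longlonglongrightarrow> ereal (inverse r)"
    by (intro tendsto_ereal) simp
  from lim_imp_Liminf[OF trivial_limit_sequentially this]
  show "1 < liminf (\<lambda>k. ereal ((real k + 2) powr \<beta> * r ^ k / ((real (Suc k) + 2) powr \<beta> * r ^ Suc k)))"
    using assms by (simp add: one_less_inverse)
qed

definition hardy_const :: "real \<Rightarrow> real \<Rightarrow> real" where
  "hardy_const \<gamma> \<beta> = (\<Sum>k. (real k + 2) powr \<beta> * (2 powr - \<gamma>) ^ Suc k)"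

lemma summable_hardy_const:
  assumes "0 < \<gamma>"
  shows "summable (\<lambda>k. (real k + 2) powr \<beta> * (2 powr - \<gamma>) ^ Suc k)"
proof -
  have "2 powr - \<gamma> < 2 powr 0" using assms by (intro powr_less_mono) auto
  then have r: "0 < 2 powr - \<gamma>" "2 powr - \<gamma> < 1" by simp_all
  show ?thesis
    using summable_mult[OF summable_powr_mult_geometric[OF r], of "2 powr - \<gamma>" \<beta>]
    by (simp add: mult.left_commute)
qed

lemma hardy_const_pos:
  assumes "0 < \<gamma>"
  shows "0 < hardy_const \<gamma> \<beta>"
  unfolding hardy_const_def
  by (rule suminf_pos[OF summable_hardy_const[OF assms]]) simp

lemma dyadic_profile_le:
  fixes u \<gamma> \<beta> :: real and k :: nat
  assumes u: "0 < u" "u < 1" and \<beta>: "0 \<le> \<beta>"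
  shows "(u / 2 ^ Suc k) powr \<gamma> * (1 - ln (u / 2 ^ Suc k)) powr \<beta>
    \<le> (real k + 2) powr \<beta> * (2 powr - \<gamma>) ^ Suc k * (u powr \<gamma> * (1 - ln u) powr \<beta>)"
proof -
  define t where "t = u / 2 ^ Suc k"
  have "u < 2 * 2 ^ k" using u one_le_power[of "2::real" k] by linarith
  then have t: "0 < t" "t < 1" unfolding t_def using u by (auto simp: field_simps)
  have "t = u / 2 powr real (Suc k)" unfolding t_def by (simp only: powr_realpow zero_less_numeral)
  then have "t powr \<gamma> = u powr \<gamma> / 2 powr (real (Suc k) * \<gamma>)"
    by (simp only: powr_divide powr_powr)
  also have "\<dots> = u powr \<gamma> * 2 powr - (real (Suc k) * \<gamma>)"
    by (simp add: powr_minus divide_inverse)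
  also have "2 powr - (real (Suc k) * \<gamma>) = (2 powr - \<gamma>) ^ Suc k"
    by (subst powr_power) simp_all
  finally have "t powr \<gamma> = u powr \<gamma> * (2 powr - \<gamma>) ^ Suc k" .
  moreover have "(1 - ln t) powr \<beta> \<le> (1 - ln u) powr \<beta> * (real k + 2) powr \<beta>"
  proof -
    have "ln t < 0" "ln u < 0" using t u by simp_all
    then have "(1 - ln t) powr \<beta> \<le> ((1 - ln u) * (real k + 2)) powr \<beta>"
      using one_minus_ln_dyadic_le[OF u, of k, folded t_def] \<beta> by (intro powr_mono2) auto
    then show ?thesis by (simp only: powr_mult)
  qed
  ultimately show ?thesis unfolding t_def[symmetric] by (auto simp: algebra_simps intro!: mult_left_mono)
qed

lemma nn_integral_le_hardy_const:
  fixes \<phi> :: "real \<Rightarrow> real" and c :: ennreal and \<gamma> \<beta> u :: real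
  assumes antimono: "\<And>s t. 0 < s \<Longrightarrow> s \<le> t \<Longrightarrow> t < 1 \<Longrightarrow> \<phi> t \<le> \<phi> s"
    and nonneg: "\<And>t. 0 < t \<Longrightarrow> t < 1 \<Longrightarrow> 0 \<le> \<phi> t"
    and bound: "\<And>t. 0 < t \<Longrightarrow> t < 1 \<Longrightarrow> ennreal (t * \<phi> t) \<le> c * ennreal (t powr \<gamma> * (1 - ln t) powr \<beta>)"
    and \<gamma>: "0 < \<gamma>" and \<beta>: "0 \<le> \<beta>" and u: "0 < u" "u < 1"
  shows "(\<integral>\<^sup>+ s. ennreal (\<phi> s) * indicator {0<..<u} s \<partial>lborel)
           \<le> c * ennreal (hardy_const \<gamma> \<beta> * u powr \<gamma> * (1 - ln u) powr \<beta>)"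
proof -
  define t where "t k = u / 2 ^ Suc k" for k :: nat
  define J where "J k = {t k<..u / 2 ^ k}" for k :: nat
  define a where "a k = (real k + 2) powr \<beta> * (2 powr - \<gamma>) ^ Suc k" for k
  have t: "0 < t k" "t k < 1" "t k \<le> u / 2 ^ k" for k
  proof -
    have "u < 2 * 2 ^ k" using u one_le_power[of "2::real" k] by linarith
    then show "0 < t k" "t k < 1" "t k \<le> u / 2 ^ k" using u by (auto simp: t_def field_simps)
  qed
  have cover: "ennreal (\<phi> s) * indicator {0<..<u} s \<le> (\<Sum>k. ennreal (\<phi> (t k)) * indicator (J k) s)" for s
  proof (cases "s \<in> {0<..<u}")
    case True
    then obtain k where k: "t k < s" "s \<le> u / 2 ^ k"
      using dyadic_cover[of s u] unfolding t_def by auto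
    have "\<phi> s \<le> \<phi> (t k)" using k t True u by (intro antimono) auto
    then have "ennreal (\<phi> s) * indicator {0<..<u} s \<le> ennreal (\<phi> (t k)) * indicator (J k) s"
      using True k by (simp add: J_def ennreal_leI)
    also have "\<dots> \<le> (\<Sum>k. ennreal (\<phi> (t k)) * indicator (J k) s)"
      by (meson ennreal_suminf_lessD not_le less_irrefl)
    finally show ?thesis .
  qed simp
  have dyadic_term: "ennreal (t k * \<phi> (t k)) \<le> c * ennreal (a k * (u powr \<gamma> * (1 - ln u) powr \<beta>))" for k
  proof -
    have "c * ennreal (t k powr \<gamma> * (1 - ln (t k)) powr \<beta>) \<le> c * ennreal (a k * (u powr \<gamma> * (1 - ln u) powr \<beta>))"
      using dyadic_profile_le[OF u \<beta>, where \<gamma> = \<gamma> and k = k] unfolding a_def t_def by (intro mult_left_mono ennreal_leI) auto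
    with bound[OF t(1,2)] show ?thesis by (rule order.trans)
  qed
  have "(\<integral>\<^sup>+ s. ennreal (\<phi> s) * indicator {0<..<u} s \<partial>lborel)
          \<le> (\<integral>\<^sup>+ s. (\<Sum>k. ennreal (\<phi> (t k)) * indicator (J k) s) \<partial>lborel)"
    by (rule nn_integral_mono) (rule cover)
  also have "\<dots> = (\<Sum>k. \<integral>\<^sup>+ s. ennreal (\<phi> (t k)) * indicator (J k) s \<partial>lborel)"
    by (rule nn_integral_suminf) (simp add: J_def)
  also have "\<dots> = (\<Sum>k. ennreal (t k * \<phi> (t k)))"
  proof (rule suminf_cong)
    fix k
    have "u / 2 ^ k - t k = t k" unfolding t_def by (simp add: field_simps)
    then show "(\<integral>\<^sup>+ s. ennreal (\<phi> (t k)) * indicator (J k) s \<partial>lborel) = ennreal (t k * \<phi> (t k))"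
      using t[of k] nonneg[of "t k"] unfolding J_def
      by (simp add: nn_integral_cmult_indicator ennreal_mult mult.commute)
  qed
  also have "\<dots> \<le> (\<Sum>k. c * ennreal (a k * (u powr \<gamma> * (1 - ln u) powr \<beta>)))"
    by (intro suminf_le dyadic_term) auto
  also have "\<dots> = c * (\<Sum>k. ennreal (a k * (u powr \<gamma> * (1 - ln u) powr \<beta>)))"
    by (rule ennreal_suminf_cmult)
  also have "(\<Sum>k. ennreal (a k * (u powr \<gamma> * (1 - ln u) powr \<beta>)))
      = ennreal (hardy_const \<gamma> \<beta> * (u powr \<gamma> * (1 - ln u) powr \<beta>))"
    using summable_hardy_const[OF \<gamma>, of \<beta>] unfolding hardy_const_def a_def
    by (subst suminf_ennreal2) (auto intro: summable_mult2 simp: suminf_mult2)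
  finally show ?thesis by (simp add: mult.assoc)
qed

section \<open>The decreasing rearrangement\<close>

abbreviation lborel_01 :: "real measure" where
  "lborel_01 \<equiv> restrict_space lborel {0<..<1}"

definition rearr_tail :: "'a::euclidean_space set \<Rightarrow> real \<Rightarrow> ('a \<Rightarrow> real) \<Rightarrow> real \<Rightarrow> ennreal" where
  "rearr_tail \<Omega> p f t = (\<integral>\<^sup>+ s\<in>{t..1}. ennreal (decr_rearr \<Omega> f s powr p) \<partial>lborel)"

lemma K_fun_le_truncation:
  fixes f :: "'a::euclidean_space \<Rightarrow> real"
  assumes f: "f \<in> borel_measurable (lebesgue_on \<Omega>)" and a: "0 \<le> a"
  shows "K_fun \<Omega> p f \<tau> \<le> (\<integral>\<^sup>+x. ennreal (max (\<bar>f x\<bar> - a) 0) \<partial>lebesgue_on \<Omega>) +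
            ennreal \<tau> * enn_powr (\<integral>\<^sup>+x. ennreal (min \<bar>f x\<bar> a powr p) \<partial>lebesgue_on \<Omega>) (1/p)"
proof -
  define g1 where "g1 x = sgn (f x) * min \<bar>f x\<bar> a" for x
  define g0 where "g0 x = f x - g1 x" for x
  note f [measurable]
  have m1: "g1 \<in> borel_measurable (lebesgue_on \<Omega>)" unfolding g1_def by measurable
  have m0: "g0 \<in> borel_measurable (lebesgue_on \<Omega>)" unfolding g0_def using m1 by measurable
  have abs_g1: "\<bar>g1 x\<bar> = min \<bar>f x\<bar> a" for x
    unfolding g1_def using a by (auto simp: sgn_if min_def)
  have abs_g0: "\<bar>g0 x\<bar> = max (\<bar>f x\<bar> - a) 0" for x
    unfolding g0_def g1_def using a
    by (cases "f x > 0"; cases "f x < 0"; cases "\<bar>f x\<bar> \<le> a") (auto simp: min_def max_def sgn_if)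
  have "K_fun \<Omega> p f \<tau> \<le> Lq_norm \<Omega> 1 g0 + ennreal \<tau> * Lq_norm \<Omega> p g1"
    unfolding K_fun_def by (rule INF_lower2[of "(g0, g1)"]) (auto simp: g0_def m0 m1)
  also have "\<dots> = (\<integral>\<^sup>+x. ennreal (max (\<bar>f x\<bar> - a) 0) \<partial>lebesgue_on \<Omega>) +
            ennreal \<tau> * enn_powr (\<integral>\<^sup>+x. ennreal (min \<bar>f x\<bar> a powr p) \<partial>lebesgue_on \<Omega>) (1/p)"
    unfolding Lq_norm_def by (simp add: abs_g0 abs_g1)
  finally show ?thesis .
qed

lemma enn_powr_rearr_tail_le_grand_norm:
  assumes p: "0 < p" and t: "0 < t" "t < 1"
  shows "enn_powr (rearr_tail \<Omega> p f t) (1/p) \<le> ennreal ((1 - ln t) powr (\<alpha>/p)) * grand_norm \<Omega> p \<alpha> f"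
proof -
  define X where "X = enn_powr (rearr_tail \<Omega> p f t) (1/p)"
  have "ln t < 0" using t by simp
  then have L: "0 < 1 - ln t" by simp
  have "ennreal ((1 - ln t) powr (- \<alpha>/p)) * X \<le> grand_norm \<Omega> p \<alpha> f"
    unfolding grand_norm_def X_def rearr_tail_def by (rule SUP_upper) (use t in simp)
  then have "ennreal ((1 - ln t) powr (\<alpha>/p)) * (ennreal ((1 - ln t) powr (- \<alpha>/p)) * X)
      \<le> ennreal ((1 - ln t) powr (\<alpha>/p)) * grand_norm \<Omega> p \<alpha> f"
    by (rule mult_left_mono) simp
  moreover have "ennreal ((1 - ln t) powr (\<alpha>/p)) * ennreal ((1 - ln t) powr (- \<alpha>/p)) = 1"
    using L by (simp add: ennreal_mult[symmetric] powr_add[symmetric])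
  ultimately show ?thesis unfolding X_def by (simp add: mult.assoc[symmetric])
qed

locale unit_domain =
  fixes \<Omega> :: "'a::euclidean_space set"
  assumes sets_\<Omega>: "\<Omega> \<in> sets lebesgue" and emeasure_\<Omega>: "emeasure lebesgue \<Omega> = 1"
begin

lemma prob_space_lebesgue_on: "prob_space (lebesgue_on \<Omega>)"
  by (rule prob_space_restrict_space) (use sets_\<Omega> emeasure_\<Omega> in auto)

lemma sets_level_set:
  fixes g :: "'a \<Rightarrow> real"
  assumes "g \<in> borel_measurable (lebesgue_on \<Omega>)"
  shows "{x\<in>\<Omega>. c < \<bar>g x\<bar>} \<in> sets (lebesgue_on \<Omega>)"
proof -
  have [measurable]: "g \<in> borel_measurable (lebesgue_on \<Omega>)" by fact
  have "{x\<in>space (lebesgue_on \<Omega>). c < \<bar>g x\<bar>} \<in> sets (lebesgue_on \<Omega>)" by measurable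
  then show ?thesis by simp
qed

lemma sets_lebesgue_level_set:
  fixes g :: "'a \<Rightarrow> real"
  assumes "g \<in> borel_measurable (lebesgue_on \<Omega>)"
  shows "{x\<in>\<Omega>. c < \<bar>g x\<bar>} \<in> sets lebesgue"
  using sets_level_set[OF assms, of c] sets_\<Omega> by (simp add: sets_restrict_space_iff)

lemma distfun_eq_emeasure:
  "distfun \<Omega> g c = emeasure (lebesgue_on \<Omega>) {x\<in>\<Omega>. c < \<bar>g x\<bar>}"
  unfolding distfun_def using sets_\<Omega> by (subst emeasure_restrict_space) auto

lemma distfun_le_1: "distfun \<Omega> g c \<le> 1"
proof -
  have "distfun \<Omega> g c \<le> emeasure lebesgue \<Omega>"
    unfolding distfun_def by (rule emeasure_mono) (use sets_\<Omega> in auto)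
  then show ?thesis using emeasure_\<Omega> by simp
qed

lemma distfun_antimono:
  fixes g :: "'a \<Rightarrow> real"
  assumes "g \<in> borel_measurable (lebesgue_on \<Omega>)" "c \<le> d"
  shows "distfun \<Omega> g d \<le> distfun \<Omega> g c"
  unfolding distfun_def
  by (rule emeasure_mono) (use assms sets_lebesgue_level_set[OF assms(1)] in auto)

lemma SUP_distfun_right:
  fixes g :: "'a \<Rightarrow> real"
  assumes g: "g \<in> borel_measurable (lebesgue_on \<Omega>)"
  shows "(SUP n. distfun \<Omega> g (c + 1 / Suc n)) = distfun \<Omega> g c"
proof -
  define A where "A n = {x\<in>\<Omega>. c + 1 / Suc n < \<bar>g x\<bar>}" for n :: nat
  have "range A \<subseteq> sets lebesgue" unfolding A_def using sets_lebesgue_level_set[OF g] by auto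
  moreover have "incseq A"
  proof (rule incseq_SucI)
    fix n
    have "1 / real (Suc (Suc n)) \<le> 1 / Suc n" by (simp add: frac_le)
    then show "A n \<subseteq> A (Suc n)" unfolding A_def by auto
  qed
  ultimately have "(SUP n. emeasure lebesgue (A n)) = emeasure lebesgue (\<Union>n. A n)"
    by (rule SUP_emeasure_incseq)
  moreover have "(\<Union>n. A n) = {x\<in>\<Omega>. c < \<bar>g x\<bar>}"
  proof safe
    fix x n assume "x \<in> A n"
    then show "x \<in> \<Omega>" "c < \<bar>g x\<bar>" unfolding A_def by (auto intro: less_trans[rotated])
  next
    fix x assume x: "x \<in> \<Omega>" "c < \<bar>g x\<bar>"
    then obtain n where "1 / Suc n < \<bar>g x\<bar> - c"
      using reals_Archimedean[of "\<bar>g x\<bar> - c"] by (auto simp: inverse_eq_divide)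
    then have "c + 1 / Suc n < \<bar>g x\<bar>" by simp
    then show "x \<in> (\<Union>n. A n)" unfolding A_def using x by blast
  qed
  ultimately have "(SUP n. emeasure lebesgue (A n)) = emeasure lebesgue {x\<in>\<Omega>. c < \<bar>g x\<bar>}"
    by simp
  then show ?thesis unfolding distfun_def A_def .
qed

lemma INF_distfun_nat:
  fixes g :: "'a \<Rightarrow> real"
  assumes g: "g \<in> borel_measurable (lebesgue_on \<Omega>)"
  shows "(INF n. distfun \<Omega> g (real n)) = 0"
proof -
  define A where "A n = {x\<in>\<Omega>. real n < \<bar>g x\<bar>}" for n :: nat
  have "range A \<subseteq> sets lebesgue" unfolding A_def using sets_lebesgue_level_set[OF g] by auto
  moreover have "decseq A"
    by (rule decseq_SucI) (auto simp: A_def)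
  moreover have "emeasure lebesgue (A n) \<noteq> \<infinity>" for n
    using distfun_le_1[of g "real n"] unfolding distfun_def A_def by (auto simp: top_unique)
  ultimately have "(INF n. emeasure lebesgue (A n)) = emeasure lebesgue (\<Inter>n. A n)"
    by (rule INF_emeasure_decseq)
  moreover have "(\<Inter>n. A n) = {}"
  proof safe
    fix x assume "x \<in> (\<Inter>n. A n)"
    moreover obtain n where "\<bar>g x\<bar> < real n" using reals_Archimedean2 by blast
    ultimately show "x \<in> {}" unfolding A_def by (auto dest: spec[of _ n])
  qed
  ultimately show ?thesis unfolding distfun_def A_def by simp
qed

text \<open>For \<open>s > 0\<close> the set whose infimum defines \<open>decr_rearr\<close> is nonempty, because the level
  sets of the real-valued \<open>g\<close> shrink to \<open>{}\<close>; so \<open>decr_rearr\<close> is never a junk value of \<open>Inf {}\<close>.\<close>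

lemma decr_rearr_set_nonempty:
  fixes g :: "'a \<Rightarrow> real"
  assumes g: "g \<in> borel_measurable (lebesgue_on \<Omega>)" and s: "0 < s"
  shows "{lam. 0 \<le> lam \<and> distfun \<Omega> g lam \<le> ennreal s} \<noteq> {}"
proof -
  have "(INF n. distfun \<Omega> g (real n)) < ennreal s" using INF_distfun_nat[OF g] s by simp
  then obtain n where "distfun \<Omega> g (real n) < ennreal s" by (auto simp: INF_less_iff)
  then show ?thesis by (intro ex_in_conv[THEN iffD1] exI[of _ "real n"]) auto
qed

lemma decr_rearr_set_bdd_below: "bdd_below {lam. 0 \<le> lam \<and> distfun \<Omega> g lam \<le> ennreal s}"
  by (rule bdd_belowI[of _ 0]) auto

lemma decr_rearr_nonneg:
  fixes g :: "'a \<Rightarrow> real"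
  assumes "g \<in> borel_measurable (lebesgue_on \<Omega>)" "0 < s"
  shows "0 \<le> decr_rearr \<Omega> g s"
  unfolding decr_rearr_def by (rule cInf_greatest[OF decr_rearr_set_nonempty[OF assms]]) auto

lemma decr_rearr_le:
  assumes "0 \<le> lam" "distfun \<Omega> g lam \<le> ennreal s"
  shows "decr_rearr \<Omega> g s \<le> lam"
  unfolding decr_rearr_def by (rule cInf_lower[OF _ decr_rearr_set_bdd_below]) (use assms in auto)

lemma distfun_decr_rearr_le:
  fixes g :: "'a \<Rightarrow> real"
  assumes g: "g \<in> borel_measurable (lebesgue_on \<Omega>)" and s: "0 < s"
  shows "distfun \<Omega> g (decr_rearr \<Omega> g s) \<le> ennreal s"
proof -
  let ?d = "decr_rearr \<Omega> g s"
  have "distfun \<Omega> g (?d + 1 / Suc n) \<le> ennreal s" for n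
  proof -
    have "Inf {lam. 0 \<le> lam \<and> distfun \<Omega> g lam \<le> ennreal s} < ?d + 1 / Suc n"
      unfolding decr_rearr_def by simp
    then obtain lam where lam: "0 \<le> lam" "distfun \<Omega> g lam \<le> ennreal s" "lam < ?d + 1 / Suc n"
      using cInf_less_iff[OF decr_rearr_set_nonempty[OF g s] decr_rearr_set_bdd_below] by blast
    have "distfun \<Omega> g (?d + 1 / Suc n) \<le> distfun \<Omega> g lam"
      using lam by (intro distfun_antimono[OF g]) simp
    also have "\<dots> \<le> ennreal s" by fact
    finally show ?thesis .
  qed
  then have "(SUP n. distfun \<Omega> g (?d + 1 / Suc n)) \<le> ennreal s" by (rule SUP_least)
  then show ?thesis using SUP_distfun_right[OF g] by simp
qed

lemma less_decr_rearr_iff: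
  fixes g :: "'a \<Rightarrow> real"
  assumes g: "g \<in> borel_measurable (lebesgue_on \<Omega>)" and s: "0 < s" and c: "0 \<le> c"
  shows "c < decr_rearr \<Omega> g s \<longleftrightarrow> ennreal s < distfun \<Omega> g c"
proof
  assume "c < decr_rearr \<Omega> g s"
  then show "ennreal s < distfun \<Omega> g c"
    using decr_rearr_le[OF c, of g s] by (meson not_le)
next
  assume "ennreal s < distfun \<Omega> g c"
  moreover have "distfun \<Omega> g c \<le> ennreal s" if "decr_rearr \<Omega> g s \<le> c"
    using distfun_antimono[OF g that] distfun_decr_rearr_le[OF g s] by (rule order.trans)
  ultimately show "c < decr_rearr \<Omega> g s" by (meson not_le)
qed

lemma decr_rearr_antimono:
  fixes g :: "'a \<Rightarrow> real"
  assumes g: "g \<in> borel_measurable (lebesgue_on \<Omega>)" and "0 < s" "s \<le> t"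
  shows "decr_rearr \<Omega> g t \<le> decr_rearr \<Omega> g s"
proof (rule decr_rearr_le)
  show "0 \<le> decr_rearr \<Omega> g s" using assms(1,2) by (rule decr_rearr_nonneg)
  have "distfun \<Omega> g (decr_rearr \<Omega> g s) \<le> ennreal s" using assms(1,2) by (rule distfun_decr_rearr_le)
  also have "\<dots> \<le> ennreal t" using assms by (simp add: ennreal_leI)
  finally show "distfun \<Omega> g (decr_rearr \<Omega> g s) \<le> ennreal t" .
qed

lemma decr_rearr_eq_0:
  fixes g :: "'a \<Rightarrow> real"
  assumes g: "g \<in> borel_measurable (lebesgue_on \<Omega>)" and s: "1 \<le> s"
  shows "decr_rearr \<Omega> g s = 0"
proof (rule antisym)
  have "distfun \<Omega> g 0 \<le> 1" by (rule distfun_le_1)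
  also have "1 \<le> ennreal s" using s by simp
  finally show "decr_rearr \<Omega> g s \<le> 0" by (intro decr_rearr_le) simp_all
  show "0 \<le> decr_rearr \<Omega> g s" using g by (rule decr_rearr_nonneg) (use s in simp)
qed

lemma emeasure_level_set_decr_rearr:
  fixes g :: "'a \<Rightarrow> real"
  assumes g: "g \<in> borel_measurable (lebesgue_on \<Omega>)"
  shows "emeasure lborel {s\<in>{0<..<1}. c < decr_rearr \<Omega> g s} = distfun \<Omega> g c"
proof (cases "c < 0")
  case True
  have "{s\<in>{0<..<1}. c < decr_rearr \<Omega> g s} = {0<..<1}"
    using decr_rearr_nonneg[OF g] True by force
  moreover have "{x\<in>\<Omega>. c < \<bar>g x\<bar>} = \<Omega>" using True by force
  ultimately show ?thesis unfolding distfun_def using emeasure_\<Omega> by simp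
next
  case False
  obtain m where m: "distfun \<Omega> g c = ennreal m" "0 \<le> m" "m \<le> 1"
    using distfun_le_1[of g c] by (cases "distfun \<Omega> g c") (auto simp: top_unique)
  have "{s\<in>{0<..<1}. c < decr_rearr \<Omega> g s} = {0<..<m}"
  proof safe
    fix s :: real assume s: "s \<in> {0<..<1}" "c < decr_rearr \<Omega> g s"
    then have "ennreal s < ennreal m" using less_decr_rearr_iff[OF g _, of s c] False m by simp
    then show "s \<in> {0<..<m}" using s by (simp add: ennreal_less_iff)
  next
    fix s :: real assume s: "s \<in> {0<..<m}"
    then show "s \<in> {0<..<1}" using m by auto
    have "ennreal s < ennreal m" using s by (simp add: ennreal_lessI)
    then show "c < decr_rearr \<Omega> g s" using less_decr_rearr_iff[OF g _, of s c] False m s by simp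
  qed
  then show ?thesis using m by simp
qed

lemma borel_measurable_decr_rearr:
  fixes g :: "'a \<Rightarrow> real"
  assumes g: "g \<in> borel_measurable (lebesgue_on \<Omega>)"
  shows "decr_rearr \<Omega> g \<in> borel_measurable lborel_01"
proof -
  have "mono_on {0<..<1} (\<lambda>s. - decr_rearr \<Omega> g s)"
    by (rule mono_onI) (use decr_rearr_antimono[OF g] in auto)
  then have "(\<lambda>s. - (- decr_rearr \<Omega> g s)) \<in> borel_measurable (restrict_space borel {0<..<1})"
    by (intro borel_measurable_uminus borel_measurable_mono_on_fnc)
  then show ?thesis by (simp cong: measurable_cong_sets add: sets_restrict_space)
qed

theorem distr_abs_eq_distr_decr_rearr:
  fixes g :: "'a \<Rightarrow> real"
  assumes g: "g \<in> borel_measurable (lebesgue_on \<Omega>)"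
  shows "distr (lebesgue_on \<Omega>) borel (\<lambda>x. \<bar>g x\<bar>) = distr lborel_01 borel (decr_rearr \<Omega> g)"
    (is "?D1 = ?D2")
proof -
  let ?M = "lebesgue_on \<Omega>"
  have PM: "prob_space ?M" by (rule prob_space_lebesgue_on)
  have PL: "prob_space lborel_01" by (rule prob_space_restrict_space) auto
  have abs_g: "(\<lambda>x. \<bar>g x\<bar>) \<in> borel_measurable ?M" using g by (rule borel_measurable_abs)
  have g_star: "decr_rearr \<Omega> g \<in> borel_measurable lborel_01" using g by (rule borel_measurable_decr_rearr)
  have "cdf ?D1 c = cdf ?D2 c" for c
  proof -
    have A1: "{x\<in>\<Omega>. c < \<bar>g x\<bar>} \<in> sets ?M" by (rule sets_level_set[OF g])
    have A2: "{s\<in>{0<..<1}. c < decr_rearr \<Omega> g s} \<in> sets lborel_01"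
      using measurable_sets[OF g_star, of "{c<..}"] by (simp add: Int_def conj_commute)
    have e2: "emeasure lborel_01 {s\<in>{0<..<1}. c < decr_rearr \<Omega> g s} = distfun \<Omega> g c"
      using emeasure_level_set_decr_rearr[OF g] by (subst emeasure_restrict_space) auto
    have "cdf ?D1 c = measure ?M ((\<lambda>x. \<bar>g x\<bar>) -` {..c} \<inter> space ?M)"
      unfolding cdf_def by (rule measure_distr[OF abs_g]) simp
    also have "(\<lambda>x. \<bar>g x\<bar>) -` {..c} \<inter> space ?M = space ?M - {x\<in>\<Omega>. c < \<bar>g x\<bar>}" by auto
    also have "measure ?M \<dots> = 1 - enn2real (distfun \<Omega> g c)"
      using prob_space.prob_compl[OF PM A1] by (simp add: measure_def distfun_eq_emeasure)
    also have "1 - enn2real (distfun \<Omega> g c)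
        = measure lborel_01 (space lborel_01 - {s\<in>{0<..<1}. c < decr_rearr \<Omega> g s})"
      using prob_space.prob_compl[OF PL A2] e2 by (simp add: measure_def)
    also have "space lborel_01 - {s\<in>{0<..<1}. c < decr_rearr \<Omega> g s}
        = decr_rearr \<Omega> g -` {..c} \<inter> space lborel_01" by auto
    also have "measure lborel_01 \<dots> = cdf ?D2 c"
      unfolding cdf_def by (rule measure_distr[OF g_star, symmetric]) simp
    finally show ?thesis .
  qed
  moreover have "real_distribution ?D1" "real_distribution ?D2"
    using prob_space.real_distribution_distr[OF PM] abs_g
      prob_space.real_distribution_distr[OF PL] g_star by simp_all
  ultimately show ?thesis using cdf_unique by blast
qed

lemma nn_integral_decr_rearr:
  fixes g :: "'a \<Rightarrow> real" and \<phi> :: "real \<Rightarrow> ennreal"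
  assumes g: "g \<in> borel_measurable (lebesgue_on \<Omega>)" and \<phi>: "\<phi> \<in> borel_measurable borel"
  shows "(\<integral>\<^sup>+x. \<phi> \<bar>g x\<bar> \<partial>lebesgue_on \<Omega>) = (\<integral>\<^sup>+s. \<phi> (decr_rearr \<Omega> g s) \<partial>lborel_01)"
proof -
  have "(\<integral>\<^sup>+x. \<phi> \<bar>g x\<bar> \<partial>lebesgue_on \<Omega>) = (\<integral>\<^sup>+y. \<phi> y \<partial>distr (lebesgue_on \<Omega>) borel (\<lambda>x. \<bar>g x\<bar>))"
    using g \<phi> by (intro nn_integral_distr[symmetric]) auto
  also have "\<dots> = (\<integral>\<^sup>+s. \<phi> (decr_rearr \<Omega> g s) \<partial>lborel_01)"
    unfolding distr_abs_eq_distr_decr_rearr[OF g]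
    using borel_measurable_decr_rearr[OF g] \<phi> by (intro nn_integral_distr) auto
  finally show ?thesis .
qed

lemma rearr_tail_eq_nn_integral_lborel_01:
  fixes g :: "'a \<Rightarrow> real"
  assumes g: "g \<in> borel_measurable (lebesgue_on \<Omega>)" and t: "0 < t" and p: "0 < p"
  shows "rearr_tail \<Omega> p g t
    = (\<integral>\<^sup>+ s. ennreal (decr_rearr \<Omega> g s powr p) * indicator {t..<1} s \<partial>lborel_01)"
proof -
  have "ennreal (decr_rearr \<Omega> g s powr p) * indicator {t..<1} s * indicator {0<..<1} s =
        ennreal (decr_rearr \<Omega> g s powr p) * indicator {t..1} s" for s
    using t decr_rearr_eq_0[OF g, of 1] by (cases "s = 1") (auto simp: indicator_def)
  then show ?thesis
    unfolding rearr_tail_def by (subst nn_integral_restrict_space) simp_all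
qed

lemma nn_integral_min_decr_rearr:
  fixes f :: "'a \<Rightarrow> real"
  assumes f: "f \<in> borel_measurable (lebesgue_on \<Omega>)" and u: "0 < u" "u < 1" and p: "0 < p"
  defines "a \<equiv> decr_rearr \<Omega> f u"
  shows "(\<integral>\<^sup>+x. ennreal (min \<bar>f x\<bar> a powr p) \<partial>lebesgue_on \<Omega>) = rearr_tail \<Omega> p f u + ennreal (a powr p * u)"
proof -
  have [measurable]: "decr_rearr \<Omega> f \<in> borel_measurable lborel_01"
    using f by (rule borel_measurable_decr_rearr)
  have ind [measurable]: "indicator A \<in> borel_measurable lborel_01" if "A \<in> sets borel" for A :: "real set"
    using that by (intro measurable_restrict_space1) simp
  have "(\<integral>\<^sup>+x. ennreal (min \<bar>f x\<bar> a powr p) \<partial>lebesgue_on \<Omega>) =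
        (\<integral>\<^sup>+ s. ennreal (min (decr_rearr \<Omega> f s) a powr p) \<partial>lborel_01)"
    by (rule nn_integral_decr_rearr[OF f]) measurable
  also have "\<dots> = (\<integral>\<^sup>+ s. ennreal (decr_rearr \<Omega> f s powr p) * indicator {u..<1} s
                      + ennreal (a powr p) * indicator {0<..<u} s \<partial>lborel_01)"
  proof (rule nn_integral_cong)
    fix s assume "s \<in> space lborel_01"
    then have s: "0 < s" "s < 1" by auto
    show "ennreal (min (decr_rearr \<Omega> f s) a powr p) = ennreal (decr_rearr \<Omega> f s powr p) * indicator {u..<1} s
            + ennreal (a powr p) * indicator {0<..<u} s"
    proof (cases "s < u")
      case True
      then have "a \<le> decr_rearr \<Omega> f s" unfolding a_def by (intro decr_rearr_antimono[OF f s(1)]) simp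
      then show ?thesis using True s by (simp add: indicator_def min_def)
    next
      case False
      then have "decr_rearr \<Omega> f s \<le> a" unfolding a_def by (intro decr_rearr_antimono[OF f u(1)]) simp
      then show ?thesis using False s by (simp add: indicator_def min_def)
    qed
  qed
  also have "\<dots> = rearr_tail \<Omega> p f u + ennreal (a powr p) * emeasure lborel_01 {0<..<u}"
  proof -
    have "{0<..<u} \<in> sets lborel_01" using u by (subst sets_restrict_space_iff) auto
    then show ?thesis
      using rearr_tail_eq_nn_integral_lborel_01[OF f u(1) p]
      by (subst nn_integral_add) (simp_all add: nn_integral_cmult_indicator)
  qed
  also have "emeasure lborel_01 {0<..<u} = ennreal u"
    using u by (subst emeasure_restrict_space) auto
  finally show ?thesis using u by (simp add: ennreal_mult)
qed

section \<open>Holmstedt-type estimates for the K-functional\<close>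

lemma mult_decr_rearr_le_nn_integral:
  fixes f :: "'a \<Rightarrow> real"
  assumes f: "f \<in> borel_measurable (lebesgue_on \<Omega>)" and u: "0 < u"
  shows "ennreal (u * decr_rearr \<Omega> f u) \<le> (\<integral>\<^sup>+ s. ennreal (decr_rearr \<Omega> f s) * indicator {0<..<u} s \<partial>lborel)"
proof -
  have "ennreal (u * decr_rearr \<Omega> f u) = (\<integral>\<^sup>+ s. ennreal (decr_rearr \<Omega> f u) * indicator {0<..<u} s \<partial>lborel)"
    using u decr_rearr_nonneg[OF f u] by (simp add: nn_integral_cmult_indicator ennreal_mult mult.commute)
  also have "\<dots> \<le> (\<integral>\<^sup>+ s. ennreal (decr_rearr \<Omega> f s) * indicator {0<..<u} s \<partial>lborel)"
    by (intro nn_integral_mono) (auto simp: indicator_def intro!: ennreal_leI decr_rearr_antimono[OF f])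
  finally show ?thesis .
qed

lemma nn_integral_excess_le:
  fixes f :: "'a \<Rightarrow> real"
  assumes f: "f \<in> borel_measurable (lebesgue_on \<Omega>)" and u: "0 < u" "u < 1"
  shows "(\<integral>\<^sup>+x. ennreal (max (\<bar>f x\<bar> - decr_rearr \<Omega> f u) 0) \<partial>lebesgue_on \<Omega>)
    \<le> (\<integral>\<^sup>+ s. ennreal (decr_rearr \<Omega> f s) * indicator {0<..<u} s \<partial>lborel)"
proof -
  let ?a = "decr_rearr \<Omega> f u"
  have "(\<integral>\<^sup>+x. ennreal (max (\<bar>f x\<bar> - ?a) 0) \<partial>lebesgue_on \<Omega>) =
        (\<integral>\<^sup>+ s. ennreal (max (decr_rearr \<Omega> f s - ?a) 0) \<partial>lborel_01)"
    by (rule nn_integral_decr_rearr[OF f]) measurable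
  also have "\<dots> \<le> (\<integral>\<^sup>+ s. ennreal (decr_rearr \<Omega> f s) * indicator {0<..<u} s \<partial>lborel_01)"
  proof (rule nn_integral_mono)
    fix s assume "s \<in> space lborel_01"
    then have s: "0 < s" "s < 1" by auto
    have "decr_rearr \<Omega> f s \<le> ?a" if "u \<le> s" using that by (rule decr_rearr_antimono[OF f u(1)])
    then show "ennreal (max (decr_rearr \<Omega> f s - ?a) 0) \<le> ennreal (decr_rearr \<Omega> f s) * indicator {0<..<u} s"
      using s decr_rearr_nonneg[OF f s(1)] decr_rearr_nonneg[OF f u(1)]
      by (cases "s < u") (auto intro!: ennreal_leI)
  qed
  also have "\<dots> = (\<integral>\<^sup>+ s. ennreal (decr_rearr \<Omega> f s) * indicator {0<..<u} s \<partial>lborel)"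
    using u by (subst nn_integral_restrict_space) (auto intro!: nn_integral_cong simp: indicator_def)
  finally show ?thesis .
qed

theorem K_fun_le_rearr:
  fixes f :: "'a \<Rightarrow> real"
  assumes f: "f \<in> borel_measurable (lebesgue_on \<Omega>)" and p: "1 < p" and u: "0 < u" "u < 1"
  defines "\<tau> \<equiv> u powr (1 - 1/p)"
  shows "K_fun \<Omega> p f \<tau> \<le> 3 * (\<integral>\<^sup>+ s. ennreal (decr_rearr \<Omega> f s) * indicator {0<..<u} s \<partial>lborel)
                         + 2 * (ennreal \<tau> * enn_powr (rearr_tail \<Omega> p f u) (1/p))"
proof -
  define a where "a = decr_rearr \<Omega> f u"
  define P where "P = (\<integral>\<^sup>+ s. ennreal (decr_rearr \<Omega> f s) * indicator {0<..<u} s \<partial>lborel)"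
  define X where "X = enn_powr (rearr_tail \<Omega> p f u) (1/p)"
  have a: "0 \<le> a" unfolding a_def using f u(1) by (rule decr_rearr_nonneg)
  have \<tau>: "0 \<le> \<tau>" "\<tau> * (a powr p * u) powr (1/p) = u * a"
    unfolding \<tau>_def using a u p by (simp_all add: powr_mult powr_powr powr_add[symmetric])
  have "K_fun \<Omega> p f \<tau> \<le> (\<integral>\<^sup>+x. ennreal (max (\<bar>f x\<bar> - a) 0) \<partial>lebesgue_on \<Omega>) +
      ennreal \<tau> * enn_powr (\<integral>\<^sup>+x. ennreal (min \<bar>f x\<bar> a powr p) \<partial>lebesgue_on \<Omega>) (1/p)"
    using f a by (rule K_fun_le_truncation)
  also have "\<dots> \<le> P + ennreal \<tau> * enn_powr (rearr_tail \<Omega> p f u + ennreal (a powr p * u)) (1/p)"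
    using nn_integral_excess_le[OF f u] nn_integral_min_decr_rearr[OF f u, of p] p
    unfolding P_def a_def by (simp add: add_right_mono)
  also have "enn_powr (rearr_tail \<Omega> p f u + ennreal (a powr p * u)) (1/p)
      \<le> 2 * (X + ennreal ((a powr p * u) powr (1/p)))"
    using enn_powr_add_le[of "1/p" "rearr_tail \<Omega> p f u" "ennreal (a powr p * u)"] p a u
    unfolding X_def by (simp add: enn_powr_ennreal)
  then have "P + ennreal \<tau> * enn_powr (rearr_tail \<Omega> p f u + ennreal (a powr p * u)) (1/p)
      \<le> P + ennreal \<tau> * (2 * (X + ennreal ((a powr p * u) powr (1/p))))"
    by (intro add_left_mono mult_left_mono) simp_all
  also have "\<dots> = P + 2 * ennreal (\<tau> * (a powr p * u) powr (1/p)) + 2 * (ennreal \<tau> * X)"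
    using \<tau>(1) a u by (simp add: distrib_left ennreal_mult mult_ac)
  also have "\<dots> \<le> 3 * P + 2 * (ennreal \<tau> * X)"
  proof -
    have "ennreal (\<tau> * (a powr p * u) powr (1/p)) \<le> P"
      using mult_decr_rearr_le_nn_integral[OF f u(1)] \<tau>(2) unfolding P_def a_def by simp
    then have "2 * ennreal (\<tau> * (a powr p * u) powr (1/p)) \<le> 2 * P"
      by (rule mult_left_mono) simp
    then have "P + 2 * ennreal (\<tau> * (a powr p * u) powr (1/p)) \<le> P + 2 * P"
      by (rule add_left_mono)
    also have "P + 2 * P = 3 * P" using distrib_right[of 1 2 P] by simp
    finally show ?thesis by (rule add_right_mono)
  qed
  finally show ?thesis unfolding P_def X_def .
qed

lemma Lq_norm_1: "Lq_norm \<Omega> 1 g = (\<integral>\<^sup>+x. ennreal \<bar>g x\<bar> \<partial>lebesgue_on \<Omega>)"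
  unfolding Lq_norm_def by simp

lemma Markov_level_set_le:
  fixes g :: "'a \<Rightarrow> real"
  assumes g: "g \<in> borel_measurable (lebesgue_on \<Omega>)" and u: "0 < u"
    and A: "(\<integral>\<^sup>+x. ennreal \<bar>g x\<bar> \<partial>lebesgue_on \<Omega>) = ennreal A" "0 \<le> A"
  shows "emeasure (lebesgue_on \<Omega>) {x\<in>\<Omega>. A / u < \<bar>g x\<bar>} \<le> ennreal u"
proof (cases "A = 0")
  case True
  then have "AE x in lebesgue_on \<Omega>. ennreal \<bar>g x\<bar> = 0"
    using A g by (subst nn_integral_0_iff_AE[symmetric]) auto
  then have "emeasure (lebesgue_on \<Omega>) {x\<in>\<Omega>. 0 < \<bar>g x\<bar>} = 0"
    using sets_level_set[OF g, of 0] by (subst AE_iff_measurable[symmetric]) auto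
  then show ?thesis using True by simp
next
  case False
  let ?E = "{x\<in>\<Omega>. A / u < \<bar>g x\<bar>}"
  have E: "?E \<in> sets (lebesgue_on \<Omega>)" by (rule sets_level_set[OF g])
  have "ennreal (A / u) * emeasure (lebesgue_on \<Omega>) ?E = (\<integral>\<^sup>+x. ennreal (A / u) * indicator ?E x \<partial>lebesgue_on \<Omega>)"
    using E by (simp add: nn_integral_cmult_indicator)
  also have "\<dots> \<le> ennreal A"
    unfolding A(1)[symmetric] by (intro nn_integral_mono) (auto simp: indicator_def intro: ennreal_leI)
  also have "\<dots> = ennreal (A / u) * ennreal u" using u A(2) by (subst ennreal_mult[symmetric]) auto
  finally show ?thesis
    using False A(2) u by (subst (asm) ennreal_mult_le_mult_iff) auto
qed

lemma rearr_tail_le_decomposition: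
  fixes f g0 g1 :: "'a \<Rightarrow> real"
  assumes f: "f \<in> borel_measurable (lebesgue_on \<Omega>)"
    and g0 [measurable]: "g0 \<in> borel_measurable (lebesgue_on \<Omega>)"
    and g1 [measurable]: "g1 \<in> borel_measurable (lebesgue_on \<Omega>)"
    and sum: "\<forall>x\<in>\<Omega>. f x = g0 x + g1 x"
    and u: "0 < u" "u < 1" and p: "1 < p" and b: "0 \<le> b"
    and small: "emeasure (lebesgue_on \<Omega>) {x\<in>\<Omega>. b < \<bar>g0 x\<bar>} \<le> ennreal u"
  shows "rearr_tail \<Omega> p f u \<le> ennreal (2 powr p) *
           (ennreal (b powr (p - 1)) * (\<integral>\<^sup>+x. ennreal \<bar>g0 x\<bar> \<partial>lebesgue_on \<Omega>)
            + (\<integral>\<^sup>+x. ennreal (\<bar>g1 x\<bar> powr p) \<partial>lebesgue_on \<Omega>))"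
    (is "_ \<le> ?R")
proof -
  define a where "a = decr_rearr \<Omega> f u"
  define E where "E = {x\<in>\<Omega>. b < \<bar>g0 x\<bar>}"
  have a: "0 \<le> a" unfolding a_def using f u(1) by (rule decr_rearr_nonneg)
  have E [measurable]: "E \<in> sets (lebesgue_on \<Omega>)" unfolding E_def by (rule sets_level_set[OF g0])
  have "rearr_tail \<Omega> p f u + ennreal (a powr p * u)
      = (\<integral>\<^sup>+x. ennreal (min \<bar>f x\<bar> a powr p) \<partial>lebesgue_on \<Omega>)"
    using nn_integral_min_decr_rearr[OF f u, of p] p unfolding a_def by simp
  also have "\<dots> \<le> (\<integral>\<^sup>+x. ennreal (a powr p) * indicator E x + ennreal (2 powr p) *
      (ennreal (b powr (p - 1)) * ennreal \<bar>g0 x\<bar> + ennreal (\<bar>g1 x\<bar> powr p)) \<partial>lebesgue_on \<Omega>)"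
  proof (rule nn_integral_mono)
    fix x assume "x \<in> space (lebesgue_on \<Omega>)"
    then have "min \<bar>f x\<bar> a powr p \<le> (if b < \<bar>g0 x\<bar> then a powr p else 0)
        + 2 powr p * (b powr (p - 1) * \<bar>g0 x\<bar> + \<bar>g1 x\<bar> powr p)"
      using sum min_powr_le_split[OF a b, of p "g0 x" "g1 x"] p by simp
    then show "ennreal (min \<bar>f x\<bar> a powr p) \<le> ennreal (a powr p) * indicator E x + ennreal (2 powr p) *
      (ennreal (b powr (p - 1)) * ennreal \<bar>g0 x\<bar> + ennreal (\<bar>g1 x\<bar> powr p))"
      using \<open>x \<in> space _\<close> by (auto simp: E_def indicator_def ennreal_mult[symmetric] ennreal_plus[symmetric]
          simp del: ennreal_plus intro!: ennreal_leI)
  qed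
  also have "\<dots> = ennreal (a powr p) * emeasure (lebesgue_on \<Omega>) E + ?R"
    by (simp add: nn_integral_add nn_integral_cmult nn_integral_cmult_indicator)
  also have "\<dots> \<le> ennreal (a powr p * u) + ?R"
    using small u unfolding E_def by (auto simp: ennreal_mult intro!: add_right_mono mult_left_mono)
  finally show ?thesis
    by (simp add: add.commute[of "rearr_tail \<Omega> p f u"] ennreal_add_left_cancel_le)
qed

lemma rearr_tail_le_decomposition_norms:
  fixes f g0 g1 :: "'a \<Rightarrow> real"
  assumes f: "f \<in> borel_measurable (lebesgue_on \<Omega>)"
    and g0: "g0 \<in> borel_measurable (lebesgue_on \<Omega>)"
    and g1: "g1 \<in> borel_measurable (lebesgue_on \<Omega>)"
    and sum: "\<forall>x\<in>\<Omega>. f x = g0 x + g1 x"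
    and u: "0 < u" "u < 1" and p: "1 < p"
  defines "\<tau> \<equiv> u powr (1 - 1/p)"
  shows "ennreal \<tau> * enn_powr (rearr_tail \<Omega> p f u) (1/p) \<le> 4 * (Lq_norm \<Omega> 1 g0 + ennreal \<tau> * Lq_norm \<Omega> p g1)"
proof -
  define I0 where "I0 = (\<integral>\<^sup>+x. ennreal \<bar>g0 x\<bar> \<partial>lebesgue_on \<Omega>)"
  define I1 where "I1 = (\<integral>\<^sup>+x. ennreal (\<bar>g1 x\<bar> powr p) \<partial>lebesgue_on \<Omega>)"
  have \<tau>: "0 < \<tau>" unfolding \<tau>_def using u by simp
  have norms: "Lq_norm \<Omega> 1 g0 = I0" "Lq_norm \<Omega> p g1 = enn_powr I1 (1/p)"
    unfolding I0_def I1_def Lq_norm_1 by (simp_all add: Lq_norm_def)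
  show ?thesis
  proof (cases "I0 = \<infinity> \<or> I1 = \<infinity>")
    case True
    then show ?thesis using \<tau> by (auto simp: norms enn_powr_def ennreal_mult_eq_top_iff)
  next
    case False
    then obtain A Bp where A: "I0 = ennreal A" "0 \<le> A" and B: "I1 = ennreal Bp" "0 \<le> Bp"
      by (cases I0; cases I1) auto
    define B where "B = Bp powr (1/p)"
    have B0: "0 \<le> B" and BpB: "Bp = B powr p" unfolding B_def using B p by (simp_all add: powr_powr)
    txt \<open>Split at the level \<open>\<parallel>g\<^sub>0\<parallel>\<^sub>1/u\<close>: by Markov's inequality \<open>|g\<^sub>0|\<close> exceeds
      it only on a set of measure at most \<open>u\<close>.\<close>
    have "rearr_tail \<Omega> p f u \<le> ennreal (2 powr p) * (ennreal ((A / u) powr (p - 1)) * I0 + I1)"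
      unfolding I0_def I1_def
    proof (rule rearr_tail_le_decomposition[OF f g0 g1 sum u p])
      show "0 \<le> A / u" using A u by simp
      show "emeasure (lebesgue_on \<Omega>) {x\<in>\<Omega>. A / u < \<bar>g0 x\<bar>} \<le> ennreal u"
        using Markov_level_set_le[OF g0 u(1)] A unfolding I0_def by simp
    qed
    also have "\<dots> = ennreal (2 powr p * ((A / u) powr (p - 1) * A + B powr p))"
      using A B BpB by (simp add: ennreal_mult ennreal_plus)
    finally have tail: "rearr_tail \<Omega> p f u \<le> ennreal (2 powr p * ((A / u) powr (p - 1) * A + B powr p))" .
    then obtain F where F: "rearr_tail \<Omega> p f u = ennreal F" "0 \<le> F"
      by (cases "rearr_tail \<Omega> p f u") (auto simp: top_unique)
    have "\<tau> * F powr (1/p) \<le> 4 * (A + \<tau> * B)"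
      unfolding \<tau>_def using tail F A B0 u(1) p by (intro mult_root_le_four_sum) simp_all
    then have "ennreal (\<tau> * F powr (1/p)) \<le> ennreal (4 * (A + \<tau> * B))" by (rule ennreal_leI)
    then show ?thesis
      using A B F \<tau> B0 unfolding norms B_def by (simp add: enn_powr_ennreal ennreal_mult)
  qed
qed

theorem rearr_tail_le_K_fun:
  fixes f :: "'a \<Rightarrow> real"
  assumes f: "f \<in> borel_measurable (lebesgue_on \<Omega>)" and u: "0 < u" "u < 1" and p: "1 < p"
  defines "\<tau> \<equiv> u powr (1 - 1/p)"
  shows "ennreal \<tau> * enn_powr (rearr_tail \<Omega> p f u) (1/p) \<le> 4 * K_fun \<Omega> p f \<tau>"
proof -
  have "ennreal (1/4) * (ennreal \<tau> * enn_powr (rearr_tail \<Omega> p f u) (1/p)) \<le> K_fun \<Omega> p f \<tau>"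
    unfolding K_fun_def
  proof (rule INF_greatest, clarify)
    fix g0 g1 assume "g0 \<in> borel_measurable (lebesgue_on \<Omega>)" "g1 \<in> borel_measurable (lebesgue_on \<Omega>)"
      "\<forall>x\<in>\<Omega>. f x = g0 x + g1 x"
    from rearr_tail_le_decomposition_norms[OF f this u p]
    show "ennreal (1/4) * (ennreal \<tau> * enn_powr (rearr_tail \<Omega> p f u) (1/p))
        \<le> Lq_norm \<Omega> 1 g0 + ennreal \<tau> * Lq_norm \<Omega> p g1"
      unfolding \<tau>_def ennreal_quarter_le_iff .
  qed
  then show ?thesis unfolding ennreal_quarter_le_iff .
qed

section \<open>Comparison of the two norms\<close>

lemma mult_decr_rearr_powr_le_rearr_tail:
  fixes f :: "'a \<Rightarrow> real"
  assumes f: "f \<in> borel_measurable (lebesgue_on \<Omega>)" and p: "0 < p" and st: "0 < s" "s \<le> t" "t \<le> 1"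
  shows "ennreal ((t - s) * decr_rearr \<Omega> f t powr p) \<le> rearr_tail \<Omega> p f s"
proof -
  let ?a = "decr_rearr \<Omega> f t"
  have "ennreal ((t - s) * ?a powr p) = ennreal (?a powr p) * ennreal (t - s)"
    using st by (subst ennreal_mult[symmetric]) (simp_all add: mult.commute)
  also have "\<dots> = (\<integral>\<^sup>+ r. ennreal (?a powr p) * indicator {s<..<t} r \<partial>lborel)"
    using st by (simp add: nn_integral_cmult_indicator)
  also have "\<dots> \<le> rearr_tail \<Omega> p f s"
    unfolding rearr_tail_def using st p
    by (intro nn_integral_mono) (auto simp: indicator_def intro!: ennreal_leI powr_mono2
        decr_rearr_antimono[OF f] decr_rearr_nonneg[OF f])
  finally show ?thesis .
qed

lemma decr_rearr_le_grand_norm: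
  fixes f :: "'a \<Rightarrow> real"
  assumes f: "f \<in> borel_measurable (lebesgue_on \<Omega>)" and p: "1 < p" and \<alpha>: "0 \<le> \<alpha>"
    and t: "0 < t" "t < 1"
  shows "ennreal (t * decr_rearr \<Omega> f t)
    \<le> ennreal (2 powr ((1 + \<alpha>)/p)) * grand_norm \<Omega> p \<alpha> f * ennreal (t powr (1 - 1/p) * (1 - ln t) powr (\<alpha>/p))"
proof -
  define a where "a = decr_rearr \<Omega> f t"
  define G where "G = grand_norm \<Omega> p \<alpha> f"
  have a: "0 \<le> a" unfolding a_def using f t(1) by (rule decr_rearr_nonneg)
  have "ennreal ((t - t/2) * a powr p) \<le> rearr_tail \<Omega> p f (t/2)"
    unfolding a_def using t p by (intro mult_decr_rearr_powr_le_rearr_tail[OF f]) auto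
  then have "enn_powr (ennreal (t/2 * a powr p)) (1/p) \<le> enn_powr (rearr_tail \<Omega> p f (t/2)) (1/p)"
    using p by (intro enn_powr_mono) auto
  also have "\<dots> \<le> ennreal ((1 - ln (t/2)) powr (\<alpha>/p)) * G"
    unfolding G_def using p t by (intro enn_powr_rearr_tail_le_grand_norm) auto
  also have "\<dots> \<le> ennreal (2 powr (\<alpha>/p) * (1 - ln t) powr (\<alpha>/p)) * G"
    using one_minus_ln_half_powr_le[OF t, of "\<alpha>/p"] \<alpha> p by (intro mult_right_mono ennreal_leI) auto
  finally have "ennreal ((t/2 * a powr p) powr (1/p)) \<le> ennreal (2 powr (\<alpha>/p) * (1 - ln t) powr (\<alpha>/p)) * G"
    using a t by (simp add: enn_powr_ennreal)
  moreover have "(t/2 * a powr p) powr (1/p) = (t/2) powr (1/p) * a"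
    unfolding powr_mult powr_powr using a p by simp
  ultimately have half: "ennreal ((t/2) powr (1/p) * a) \<le> ennreal (2 powr (\<alpha>/p) * (1 - ln t) powr (\<alpha>/p)) * G"
    by simp
  have "t * a = 2 powr (1/p) * t powr (1 - 1/p) * ((t/2) powr (1/p) * a)"
    using t by (simp add: powr_divide powr_add[symmetric] field_simps)
  then have "ennreal (t * a) = ennreal (2 powr (1/p) * t powr (1 - 1/p)) * ennreal ((t/2) powr (1/p) * a)"
    using a by (simp only:) (intro ennreal_mult; simp)
  also have "\<dots> \<le> ennreal (2 powr (1/p) * t powr (1 - 1/p)) * (ennreal (2 powr (\<alpha>/p) * (1 - ln t) powr (\<alpha>/p)) * G)"
    using half by (rule mult_left_mono) simp
  also have "\<dots> = ennreal (2 powr ((1 + \<alpha>)/p)) * G * ennreal (t powr (1 - 1/p) * (1 - ln t) powr (\<alpha>/p))"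
  proof -
    have "2 powr ((1 + \<alpha>)/p) = 2 powr (1/p) * 2 powr (\<alpha>/p)" by (simp add: add_divide_distrib powr_add)
    then show ?thesis using t by (simp add: ennreal_mult[symmetric] ac_simps)
  qed
  finally show ?thesis unfolding a_def G_def .
qed

lemma nn_integral_decr_rearr_le_grand_norm:
  fixes f :: "'a \<Rightarrow> real"
  assumes f: "f \<in> borel_measurable (lebesgue_on \<Omega>)" and p: "1 < p" and \<alpha>: "0 \<le> \<alpha>"
    and u: "0 < u" "u < 1"
  shows "(\<integral>\<^sup>+ s. ennreal (decr_rearr \<Omega> f s) * indicator {0<..<u} s \<partial>lborel)
    \<le> ennreal (2 powr ((1 + \<alpha>)/p)) * grand_norm \<Omega> p \<alpha> f *
       ennreal (hardy_const (1 - 1/p) (\<alpha>/p) * u powr (1 - 1/p) * (1 - ln u) powr (\<alpha>/p))"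
proof (rule nn_integral_le_hardy_const[OF _ _ _ _ _ u])
  show "\<And>s t. 0 < s \<Longrightarrow> s \<le> t \<Longrightarrow> t < 1 \<Longrightarrow> decr_rearr \<Omega> f t \<le> decr_rearr \<Omega> f s"
    by (rule decr_rearr_antimono[OF f])
  show "\<And>t. 0 < t \<Longrightarrow> t < 1 \<Longrightarrow> 0 \<le> decr_rearr \<Omega> f t"
    by (rule decr_rearr_nonneg[OF f])
qed (use decr_rearr_le_grand_norm[OF f p \<alpha>] p \<alpha> in auto)

theorem K_fun_le_grand_norm:
  fixes f :: "'a \<Rightarrow> real"
  assumes f: "f \<in> borel_measurable (lebesgue_on \<Omega>)" and p: "1 < p" and \<alpha>: "0 \<le> \<alpha>"
    and u: "0 < u" "u < 1"
  defines "\<tau> \<equiv> u powr (1 - 1/p)"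
    and "C \<equiv> 3 * 2 powr ((1 + \<alpha>)/p) * hardy_const (1 - 1/p) (\<alpha>/p) + 2"
  shows "K_fun \<Omega> p f \<tau> \<le> ennreal (C * \<tau> * (1 - ln u) powr (\<alpha>/p)) * grand_norm \<Omega> p \<alpha> f"
proof -
  define G where "G = grand_norm \<Omega> p \<alpha> f"
  define W where "W = \<tau> * (1 - ln u) powr (\<alpha>/p)"
  define H where "H = hardy_const (1 - 1/p) (\<alpha>/p)"
  have H: "0 < H" unfolding H_def using p by (intro hardy_const_pos) (simp add: field_simps)
  have W: "0 \<le> W" unfolding W_def \<tau>_def by simp
  have "K_fun \<Omega> p f \<tau> \<le> 3 * (\<integral>\<^sup>+ s. ennreal (decr_rearr \<Omega> f s) * indicator {0<..<u} s \<partial>lborel)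
                         + 2 * (ennreal \<tau> * enn_powr (rearr_tail \<Omega> p f u) (1/p))"
    unfolding \<tau>_def by (rule K_fun_le_rearr[OF f p u])
  also have "\<dots> \<le> 3 * (ennreal (2 powr ((1 + \<alpha>)/p)) * G * ennreal (H * W))
                  + 2 * (ennreal \<tau> * (ennreal ((1 - ln u) powr (\<alpha>/p)) * G))"
    using nn_integral_decr_rearr_le_grand_norm[OF f p \<alpha> u] enn_powr_rearr_tail_le_grand_norm[of p u \<Omega> f \<alpha>] p u
    unfolding G_def H_def W_def \<tau>_def
    by (intro add_mono mult_left_mono) (simp_all add: mult.assoc)
  also have "\<dots> = ennreal (3 * 2 powr ((1 + \<alpha>)/p) * H * W) * G + ennreal (2 * W) * G"
    using H W unfolding W_def \<tau>_def by (simp add: ennreal_mult ac_simps)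
  also have "\<dots> = ennreal (C * W) * G"
    using H W unfolding C_def H_def by (simp add: distrib_right[symmetric] ennreal_plus[symmetric] del: ennreal_plus)
  finally show ?thesis unfolding W_def G_def by (simp add: mult.assoc)
qed

theorem grand_norm_le_interp_norm:
  fixes f :: "'a \<Rightarrow> real"
  assumes f: "f \<in> borel_measurable (lebesgue_on \<Omega>)" and p: "1 < p" and \<alpha>: "0 \<le> \<alpha>"
  shows "grand_norm \<Omega> p \<alpha> f \<le> 4 * interp_norm \<Omega> p (-\<alpha>/p) f"
  unfolding grand_norm_def rearr_tail_def[symmetric]
proof (rule SUP_least)
  fix u :: real assume "u \<in> {0<..<1}"
  then have u: "0 < u" "u < 1" by auto
  define \<tau> where "\<tau> = u powr (1 - 1/p)"
  define X where "X = enn_powr (rearr_tail \<Omega> p f u) (1/p)"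
  have "\<tau> < 1 powr (1 - 1/p)" unfolding \<tau>_def using u p by (intro powr_less_mono2) auto
  then have \<tau>: "0 < \<tau>" "\<tau> < 1" unfolding \<tau>_def using u by auto
  have "u powr 1 \<le> u powr (1 - 1/p)" using u p by (intro powr_mono') auto
  then have "1 - ln \<tau> \<le> 1 - ln u" unfolding \<tau>_def using u p by simp
  moreover have "ln \<tau> < 0" using \<tau> by simp
  then have "0 < 1 - ln \<tau>" by simp
  ultimately have weight: "(1 - ln u) powr (-\<alpha>/p) \<le> (1 - ln \<tau>) powr (-\<alpha>/p)"
    using \<alpha> p by (intro powr_mono2') auto
  have "ennreal ((1 - ln u) powr (-\<alpha>/p)) * X \<le> ennreal ((1 - ln \<tau>) powr (-\<alpha>/p)) * X"
    using weight by (intro mult_right_mono ennreal_leI) auto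
  also have "\<dots> = ennreal (\<tau> powr (-1) * (1 - ln \<tau>) powr (-\<alpha>/p)) * (ennreal \<tau> * X)"
  proof -
    have "(1 - ln \<tau>) powr (-\<alpha>/p) = \<tau> powr (-1) * (1 - ln \<tau>) powr (-\<alpha>/p) * \<tau>"
      using \<tau> by (simp add: powr_minus field_simps)
    then show ?thesis using \<tau> by (simp add: ennreal_mult[symmetric] mult.assoc[symmetric])
  qed
  also have "\<dots> \<le> ennreal (\<tau> powr (-1) * (1 - ln \<tau>) powr (-\<alpha>/p)) * (4 * K_fun \<Omega> p f \<tau>)"
    unfolding X_def \<tau>_def by (intro mult_left_mono rearr_tail_le_K_fun[OF f u p]) simp
  also have "\<dots> = 4 * (ennreal (\<tau> powr (-1) * (1 - ln \<tau>) powr (-\<alpha>/p)) * K_fun \<Omega> p f \<tau>)"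
    by (simp add: ac_simps)
  also have "\<dots> \<le> 4 * interp_norm \<Omega> p (-\<alpha>/p) f"
    unfolding interp_norm_def using \<tau> by (intro mult_left_mono SUP_upper) auto
  finally show "ennreal ((1 - ln u) powr (-\<alpha>/p)) * X \<le> 4 * interp_norm \<Omega> p (-\<alpha>/p) f" .
qed

theorem interp_norm_le_grand_norm:
  fixes f :: "'a \<Rightarrow> real"
  assumes f: "f \<in> borel_measurable (lebesgue_on \<Omega>)" and p: "1 < p" and \<alpha>: "0 \<le> \<alpha>"
  defines "C \<equiv> 3 * 2 powr ((1 + \<alpha>)/p) * hardy_const (1 - 1/p) (\<alpha>/p) + 2"
  shows "interp_norm \<Omega> p (-\<alpha>/p) f \<le> ennreal ((p/(p-1)) powr (\<alpha>/p) * C) * grand_norm \<Omega> p \<alpha> f"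
  unfolding interp_norm_def
proof (rule SUP_least)
  fix \<tau> :: real assume "\<tau> \<in> {0<..<1}"
  then have \<tau>: "0 < \<tau>" "\<tau> < 1" by auto
  define q where "q = p/(p-1)"
  define u where "u = \<tau> powr q"
  have q: "1 \<le> q" unfolding q_def using p by simp
  have "\<tau> powr q < 1 powr q" using \<tau> q by (intro powr_less_mono2) auto
  then have u: "0 < u" "u < 1" unfolding u_def using \<tau> by auto
  have \<tau>u: "\<tau> = u powr (1 - 1/p)"
    unfolding u_def q_def using \<tau> p by (simp add: powr_powr field_simps)
  have C: "0 \<le> C" unfolding C_def using hardy_const_pos[of "1 - 1/p" "\<alpha>/p"] p by (simp add: field_simps)
  have weight: "(1 - ln \<tau>) powr (-\<alpha>/p) * (1 - ln u) powr (\<alpha>/p) \<le> q powr (\<alpha>/p)"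
    using log_weight_ratio_le[OF \<tau> q, of "\<alpha>/p"] \<alpha> p unfolding u_def by simp
  have "ennreal (\<tau> powr (-1) * (1 - ln \<tau>) powr (-\<alpha>/p)) * K_fun \<Omega> p f \<tau>
      \<le> ennreal (\<tau> powr (-1) * (1 - ln \<tau>) powr (-\<alpha>/p)) *
         (ennreal (C * \<tau> * (1 - ln u) powr (\<alpha>/p)) * grand_norm \<Omega> p \<alpha> f)"
    unfolding \<tau>u C_def by (intro mult_left_mono K_fun_le_grand_norm[OF f p \<alpha> u]) simp
  also have "\<dots> = ennreal ((1 - ln \<tau>) powr (-\<alpha>/p) * (1 - ln u) powr (\<alpha>/p) * C) * grand_norm \<Omega> p \<alpha> f"
    using \<tau> C by (simp add: ennreal_mult[symmetric] powr_minus field_simps)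
  also have "\<dots> \<le> ennreal ((p/(p-1)) powr (\<alpha>/p) * C) * grand_norm \<Omega> p \<alpha> f"
    using weight C unfolding q_def by (intro mult_right_mono ennreal_leI mult_right_mono) auto
  finally show "ennreal (\<tau> powr (-1) * (1 - ln \<tau>) powr (-\<alpha>/p)) * K_fun \<Omega> p f \<tau>
      \<le> ennreal ((p/(p-1)) powr (\<alpha>/p) * C) * grand_norm \<Omega> p \<alpha> f" .
qed

end

theorem lemma3p2:
  fixes \<Omega> :: "'a::euclidean_space set" and p \<alpha> :: real
  assumes "open \<Omega>" and "bounded \<Omega>" and "emeasure lebesgue \<Omega> = 1"
    and "1 < p" and "0 < \<alpha>"
  shows "\<exists>c C. 0 < c \<and> 0 < C \<and>
           (\<forall>f \<in> borel_measurable (lebesgue_on \<Omega>).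
              ennreal c * grand_norm \<Omega> p \<alpha> f \<le> interp_norm \<Omega> p (-\<alpha>/p) f \<and>
              interp_norm \<Omega> p (-\<alpha>/p) f \<le> ennreal C * grand_norm \<Omega> p \<alpha> f)"
proof -
  interpret unit_domain \<Omega>
    using assms(1-3) by unfold_locales (auto intro: lmeasurable_open)
  define C where "C = (p/(p-1)) powr (\<alpha>/p) * (3 * 2 powr ((1 + \<alpha>)/p) * hardy_const (1 - 1/p) (\<alpha>/p) + 2)"
  have "0 < hardy_const (1 - 1/p) (\<alpha>/p)" using assms(4) by (intro hardy_const_pos) (simp add: field_simps)
  then have "0 < C" unfolding C_def using assms(4) by (intro mult_pos_pos add_pos_pos) auto
  moreover have "ennreal (1/4) * grand_norm \<Omega> p \<alpha> f \<le> interp_norm \<Omega> p (-\<alpha>/p) f"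
    "interp_norm \<Omega> p (-\<alpha>/p) f \<le> ennreal C * grand_norm \<Omega> p \<alpha> f"
    if "f \<in> borel_measurable (lebesgue_on \<Omega>)" for f
    using grand_norm_le_interp_norm[OF that] interp_norm_le_grand_norm[OF that] assms(4,5)
    unfolding C_def ennreal_quarter_le_iff by auto
  ultimately show ?thesis by (intro exI[of _ "1/4"] exI[of _ C]) auto
qed

end
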